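(* Let $A\subset\mathbb{R}^n$ with $0\in\overline{A}$, and let $\phi:(\mathbb{R}^n,0)\to(\mathbb{R}^n,0)$ be a bi-Lipschitz homeomorphism with constants $0<K_1\le K_2$, i.e. $K_1|x_1-x_2|\le|\phi(x_1)-\phi(x_2)|\le K_2|x_1-x_2|$ near $0$. Then for $d>0$ and $K>0$, $$ST_d\Big(\phi(A);\frac{KK_1}{K_2^d}\Big)\subset\phi(ST_d(A;K))\subset ST_d\Big(\phi(A);\frac{KK_2}{K_1^d}\Big)$$ in a small neighbourhood of $0\in\mathbb{R}^n$.
   Context: Sea-tangle neighbourhood of degree $d>0$ and width $C>0$: $ST_d(X;C)=\{x\in\mathbb{R}^n : \mathrm{dist}(x,X)\le C|x|^d\}$. *)

theory Defs
  imports "HOL-Analysis.Analysis"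
begin

definition sea_tangle :: "real \<Rightarrow> ('a::euclidean_space) set \<Rightarrow> real \<Rightarrow> 'a set" where
  "sea_tangle d X C = {x. infdist x X \<le> C * norm x powr d}"

end

theory Submission
  imports Defs
begin

text \<open>
  For a point \<open>x\<close> close to \<open>0\<close> the nearly nearest points of \<open>A\<close> are close to \<open>0\<close> as well
  (because \<open>0 \<in> closure A\<close>), so \<open>dist (\<phi> x) (\<phi> ` A) \<le> K2 dist(x, A)\<close>, while
  \<open>|x| \<le> |\<phi> x| / K1\<close>; together these give the right-hand inclusion. The left-hand one is the
  same argument for the inverse \<open>\<psi>\<close>, which by continuity at \<open>0\<close> maps a small ball into the
  ball where \<open>\<phi>\<close> is bi-Lipschitz, and is therefore bi-Lipschitz there with constants
  \<open>1/K2\<close> and \<open>1/K1\<close>.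
\<close>

definition bilipschitz_on :: "real \<Rightarrow> real \<Rightarrow> 'a::metric_space set \<Rightarrow> ('a \<Rightarrow> 'b::metric_space) \<Rightarrow> bool"
  where "bilipschitz_on c L S f \<longleftrightarrow>
    L-lipschitz_on S f \<and> (\<forall>x\<in>S. \<forall>y\<in>S. c * dist x y \<le> dist (f x) (f y))"

lemma bilipschitz_onI:
  assumes "\<And>x y. x \<in> S \<Longrightarrow> y \<in> S \<Longrightarrow>
      c * dist x y \<le> dist (f x) (f y) \<and> dist (f x) (f y) \<le> L * dist x y"
    and "0 \<le> L"
  shows "bilipschitz_on c L S f"
  using assms by (auto simp: bilipschitz_on_def lipschitz_on_def)

lemma bilipschitz_onD:
  assumes "bilipschitz_on c L S f" "x \<in> S" "y \<in> S"
  shows "c * dist x y \<le> dist (f x) (f y)" and "dist (f x) (f y) \<le> L * dist x y"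
  using assms by (auto simp: bilipschitz_on_def lipschitz_on_def)

lemma bilipschitz_on_inverse:
  assumes bilip: "bilipschitz_on c L T \<phi>" and inv: "\<And>y. y \<in> S \<Longrightarrow> \<psi> y \<in> T \<and> \<phi> (\<psi> y) = y"
    and "0 < c" "0 < L"
  shows "bilipschitz_on (1 / L) (1 / c) S \<psi>"
proof (rule bilipschitz_onI)
  fix y1 y2 assume "y1 \<in> S" "y2 \<in> S"
  then have "c * dist (\<psi> y1) (\<psi> y2) \<le> dist y1 y2" and "dist y1 y2 \<le> L * dist (\<psi> y1) (\<psi> y2)"
    using inv bilipschitz_onD[OF bilip, of "\<psi> y1" "\<psi> y2"] by metis+
  then show "1 / L * dist y1 y2 \<le> dist (\<psi> y1) (\<psi> y2) \<and> dist (\<psi> y1) (\<psi> y2) \<le> 1 / c * dist y1 y2"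
    using \<open>0 < c\<close> \<open>0 < L\<close> by (simp add: field_simps)
qed (use \<open>0 < c\<close> in simp)

lemma infdist_image_le_lipschitz:
  fixes f :: "'a::metric_space \<Rightarrow> 'b::metric_space"
  assumes lip: "L-lipschitz_on S f" and ball: "ball x R \<subseteq> S" and near: "infdist x A < R"
  shows "infdist (f x) (f ` A) \<le> L * infdist x A"
proof (cases "A = {}")
  case True
  then show ?thesis by (simp add: infdist_def)
next
  case False
  have L: "0 \<le> L" using lip by (rule lipschitz_on_nonneg)
  have "x \<in> S" using ball near infdist_nonneg[of x A] by auto
  show ?thesis
  proof (rule field_le_epsilon)
    fix e :: real assume "0 < e"
    define \<eta> where "\<eta> = min (e / (L + 1)) (R - infdist x A)"
    have "0 < \<eta>" using \<open>0 < e\<close> L near by (simp add: \<eta>_def)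
    then have "(INF a\<in>A. dist x a) < infdist x A + \<eta>" using infdist_notempty[OF False] by simp
    then obtain a where a: "a \<in> A" "dist x a < infdist x A + \<eta>"
      using cINF_less_iff[OF False bdd_below_image_dist[of x A]] by blast
    then have "a \<in> S" using ball by (auto simp: \<eta>_def)
    have "infdist (f x) (f ` A) \<le> dist (f x) (f a)" using a(1) by (simp add: infdist_le)
    also have "\<dots> \<le> L * dist x a" using lip \<open>x \<in> S\<close> \<open>a \<in> S\<close> by (rule lipschitz_onD)
    also have "\<dots> \<le> L * infdist x A + L * \<eta>"
      using a(2) L by (simp add: distrib_left[symmetric] mult_left_mono)
    also have "L * \<eta> \<le> L * (e / (L + 1))" using L by (intro mult_left_mono) (auto simp: \<eta>_def)
    also have "\<dots> \<le> e" using \<open>0 < e\<close> L by (simp add: field_simps)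
    finally show "infdist (f x) (f ` A) \<le> L * infdist x A + e" by simp
  qed
qed

lemma infdist_le_norm:
  fixes x :: "'a::real_normed_vector"
  assumes "0 \<in> closure A"
  shows "infdist x A \<le> norm x"
proof -
  have "A \<noteq> {}" using assms by auto
  then have "infdist 0 A = 0" using assms in_closure_iff_infdist_zero[of A 0] by simp
  then show ?thesis using infdist_triangle[of x A 0] by simp
qed

lemma image_sea_tangle_subset:
  fixes f :: "'a::euclidean_space \<Rightarrow> 'b::euclidean_space"
  assumes "f 0 = 0" and bilip: "bilipschitz_on c L (ball 0 \<rho>) f" and "0 < c"
    and "0 \<in> closure A" and "0 \<le> d" and "0 \<le> K"
  shows "f ` (sea_tangle d A K \<inter> ball 0 (\<rho> / 2)) \<subseteq> sea_tangle d (f ` A) (K * L / c powr d)"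
proof safe
  fix x assume "x \<in> sea_tangle d A K" and x: "x \<in> ball 0 (\<rho> / 2)"
  then have tangle: "infdist x A \<le> K * norm x powr d" by (simp add: sea_tangle_def)
  have lip: "L-lipschitz_on (ball 0 \<rho>) f" and "0 \<le> L"
    using bilip lipschitz_on_nonneg by (auto simp: bilipschitz_on_def)
  have "ball x (\<rho> / 2) \<subseteq> ball 0 \<rho>" using x by (simp add: ball_subset_ball_iff)
  moreover have "infdist x A < \<rho> / 2" using infdist_le_norm[OF \<open>0 \<in> closure A\<close>, of x] x by simp
  ultimately have "infdist (f x) (f ` A) \<le> L * infdist x A"
    by (rule infdist_image_le_lipschitz[OF lip])
  also have "\<dots> \<le> L * (K * norm x powr d)" using tangle \<open>0 \<le> L\<close> by (rule mult_left_mono)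
  also have "\<dots> \<le> L * (K * (norm (f x) / c) powr d)"
  proof -
    have "x \<in> ball 0 \<rho>" "0 < \<rho>" using x norm_ge_zero[of x] unfolding mem_ball_0 by linarith+
    then have "c * norm x \<le> norm (f x)" using bilipschitz_onD(1)[OF bilip, of x 0] \<open>f 0 = 0\<close> by simp
    then have "norm x \<le> norm (f x) / c" using \<open>0 < c\<close> by (simp add: field_simps)
    then show ?thesis using \<open>0 \<le> L\<close> \<open>0 \<le> d\<close> \<open>0 \<le> K\<close> by (intro mult_left_mono powr_mono2) auto
  qed
  also have "\<dots> = K * L / c powr d * norm (f x) powr d" using \<open>0 < c\<close> by (simp add: powr_divide)
  finally show "f x \<in> sea_tangle d (f ` A) (K * L / c powr d)" by (simp add: sea_tangle_def)
qed

lemma homeomorphism_inverse_bilipschitz_near_0: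
  fixes \<phi> :: "'a::real_normed_vector \<Rightarrow> 'b::real_normed_vector"
  assumes hom: "homeomorphism UNIV UNIV \<phi> \<psi>" and "\<phi> 0 = 0"
    and bilip: "bilipschitz_on c L (ball 0 r) \<phi>" and "0 < c" "0 < L"
    and "0 < \<rho>" "\<rho> \<le> r"
  obtains \<delta> where "0 < \<delta>" "\<psi> ` ball 0 \<delta> \<subseteq> ball 0 \<rho>"
    and "bilipschitz_on (1 / L) (1 / c) (ball 0 \<delta>) \<psi>"
proof -
  have \<psi>\<phi>: "\<And>x. \<psi> (\<phi> x) = x" and \<phi>\<psi>: "\<And>y. \<phi> (\<psi> y) = y" and "continuous_on UNIV \<psi>"
    using hom by (auto simp: homeomorphism_def)
  have "\<psi> 0 = 0" using \<psi>\<phi>[of 0] \<open>\<phi> 0 = 0\<close> by simp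
  have "isCont \<psi> 0" using \<open>continuous_on UNIV \<psi>\<close> by (simp add: continuous_on_eq_continuous_at)
  then obtain \<delta> where "0 < \<delta>" and near: "\<psi> ` ball 0 \<delta> \<subseteq> ball 0 \<rho>"
    using \<open>0 < \<rho>\<close> \<open>\<psi> 0 = 0\<close> unfolding continuous_at_ball by metis
  have "\<psi> y \<in> ball 0 r \<and> \<phi> (\<psi> y) = y" if "y \<in> ball 0 \<delta>" for y
    using near that \<phi>\<psi> \<open>\<rho> \<le> r\<close> by fastforce
  with bilip have "bilipschitz_on (1 / L) (1 / c) (ball 0 \<delta>) \<psi>"
    using \<open>0 < c\<close> \<open>0 < L\<close> by (rule bilipschitz_on_inverse)
  with \<open>0 < \<delta>\<close> near show ?thesis by (rule that)
qed

theorem lemma4p4: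
  fixes A :: "'a::euclidean_space set" and \<phi> \<psi> :: "'a \<Rightarrow> 'a"
    and K1 K2 d K r :: real
  assumes "0 \<in> closure A"
    and "homeomorphism UNIV UNIV \<phi> \<psi>"
    and "\<phi> 0 = 0"
    and "0 < K1" and "K1 \<le> K2"
    and "0 < r"
    and "\<And>x1 x2. x1 \<in> ball 0 r \<Longrightarrow> x2 \<in> ball 0 r \<Longrightarrow>
            K1 * norm (x1 - x2) \<le> norm (\<phi> x1 - \<phi> x2) \<and> norm (\<phi> x1 - \<phi> x2) \<le> K2 * norm (x1 - x2)"
    and "0 < d" and "0 < K"
  shows "\<exists>\<epsilon>>0.
           sea_tangle d (\<phi> ` A) (K * K1 / K2 powr d) \<inter> ball 0 \<epsilon> \<subseteq> \<phi> ` sea_tangle d A K \<and>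
           \<phi> ` sea_tangle d A K \<inter> ball 0 \<epsilon> \<subseteq> sea_tangle d (\<phi> ` A) (K * K2 / K1 powr d)"
proof -
  have \<psi>\<phi>: "\<And>x. \<psi> (\<phi> x) = x" and \<phi>\<psi>: "\<And>y. \<phi> (\<psi> y) = y"
    and "continuous_on UNIV \<phi>"
    using assms(2) by (auto simp: homeomorphism_def)
  have "\<psi> 0 = 0" "0 < K2" using \<psi>\<phi>[of 0] assms(3-5) by auto
  have \<phi>_bilip: "bilipschitz_on K1 K2 (ball 0 r) \<phi>"
    using assms(7) \<open>0 < K2\<close> by (intro bilipschitz_onI) (auto simp: dist_norm)
  obtain \<delta> where "0 < \<delta>" and \<psi>_near: "\<psi> ` ball 0 \<delta> \<subseteq> ball 0 (r / 2)"
    and \<psi>_bilip: "bilipschitz_on (1 / K2) (1 / K1) (ball 0 \<delta>) \<psi>"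
    using homeomorphism_inverse_bilipschitz_near_0[OF assms(2,3) \<phi>_bilip assms(4) \<open>0 < K2\<close>, of "r / 2"]
      \<open>0 < r\<close> by auto
  have "0 \<in> closure (\<phi> ` A)"
    using continuous_image_closure_subset[OF \<open>continuous_on UNIV \<phi>\<close>, of A] assms(1,3) by force
  have "\<psi> ` (sea_tangle d (\<phi> ` A) (K * K1 / K2 powr d) \<inter> ball 0 (\<delta> / 2))
      \<subseteq> sea_tangle d (\<psi> ` \<phi> ` A) (K * K1 / K2 powr d * (1 / K1) / (1 / K2) powr d)"
    by (rule image_sea_tangle_subset[OF \<open>\<psi> 0 = 0\<close> \<psi>_bilip])
      (use assms(4,8,9) \<open>0 < K2\<close> \<open>0 \<in> closure (\<phi> ` A)\<close> in simp_all)
  also have "\<dots> = sea_tangle d A K"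
  proof -
    have "(1 / K2) powr d = 1 / K2 powr d" by (simp add: powr_divide)
    then show ?thesis using \<psi>\<phi> assms(4) \<open>0 < K2\<close> by (simp add: image_comp)
  qed
  finally have backward:
    "sea_tangle d (\<phi> ` A) (K * K1 / K2 powr d) \<inter> ball 0 (\<delta> / 2) \<subseteq> \<phi> ` sea_tangle d A K"
    using \<phi>\<psi> by (auto intro!: image_eqI)
  have "\<phi> ` (sea_tangle d A K \<inter> ball 0 (r / 2)) \<subseteq> sea_tangle d (\<phi> ` A) (K * K2 / K1 powr d)"
    by (rule image_sea_tangle_subset[OF assms(3) \<phi>_bilip]) (use assms(1,4,8,9) in simp_all)
  moreover have "\<phi> ` sea_tangle d A K \<inter> ball 0 (\<delta> / 2) \<subseteq> \<phi> ` (sea_tangle d A K \<inter> ball 0 (r / 2))"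
  proof safe
    fix x assume "x \<in> sea_tangle d A K" "\<phi> x \<in> ball 0 (\<delta> / 2)"
    then have "\<psi> (\<phi> x) \<in> ball 0 (r / 2)" using \<psi>_near \<open>0 < \<delta>\<close> by (auto simp: image_subset_iff)
    then show "\<phi> x \<in> \<phi> ` (sea_tangle d A K \<inter> ball 0 (r / 2))"
      using \<open>x \<in> sea_tangle d A K\<close> \<psi>\<phi> by simp
  qed
  ultimately show ?thesis using backward \<open>0 < \<delta>\<close> by (intro exI[of _ "\<delta> / 2"]) auto
qed

end
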